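(* Let $X,Y$ be metric spaces and $f,g:X\to Y$ be 1-Lipschitz maps. For any two Borel probability measures $\mu,\nu$ on $X$, \[ |d_{\mathrm{KF}}^\mu(f,g)-d_{\mathrm{KF}}^\nu(f,g)|\le 2\,d_{\mathrm P}(\mu,\nu). \]
   Context: For a Borel probability measure $\mu$ on $X$ and maps $f,g:X\to Y$, $d_{\mathrm{KF}}^\mu(f,g):=\inf\{\varepsilon\ge0:\mu(\{x: d_Y(f(x),g(x))>\varepsilon\})\le\varepsilon\}$. $d_{\mathrm P}$ is the Prohorov metric: $d_{\mathrm P}(\mu,\nu):=\inf\{\varepsilon>0:\mu(U_\varepsilon(A))\ge\nu(A)-\varepsilon\ \forall\text{ Borel }A\subset X\}$, $U_\varepsilon(A)$ the open $\varepsilon$-neighborhood. *)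

theory Defs
  imports "HOL-Probability.Probability"
begin

definition ky_fan :: "'a measure \<Rightarrow> ('a \<Rightarrow> 'b::metric_space) \<Rightarrow> ('a \<Rightarrow> 'b) \<Rightarrow> real" where
  "ky_fan \<mu> f g = Inf {\<epsilon>. \<epsilon> \<ge> 0 \<and> measure \<mu> {x \<in> space \<mu>. dist (f x) (g x) > \<epsilon>} \<le> \<epsilon>}"

definition open_nbhd :: "real \<Rightarrow> 'a::metric_space set \<Rightarrow> 'a set" where
  "open_nbhd \<epsilon> A = {x. \<exists>a\<in>A. dist x a < \<epsilon>}"

definition prohorov :: "'a::metric_space measure \<Rightarrow> 'a measure \<Rightarrow> real" where
  "prohorov \<mu> \<nu> = Inf {\<epsilon>. \<epsilon> > 0 \<and>
     (\<forall>A \<in> sets borel. measure \<mu> (open_nbhd \<epsilon> A) \<ge> measure \<nu> A - \<epsilon>)}"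

end

theory Submission
  imports Defs
begin

text \<open>
  For 1-Lipschitz f and g the discrepancy x \<mapsto> d(f x, g x) is 2-Lipschitz, so moving a point
  by less than e changes it by less than 2e. Hence if every Borel set A satisfies
  \<mu>(A) \<le> \<nu>(U(e, A)) + e, the e-neighbourhood of the set where the discrepancy exceeds d + 2e
  lies in the set where it exceeds d; so a Ky Fan witness d for \<nu> yields the witness d + 2e
  for \<mu>.
  The Prohorov condition is symmetric (pass to complements), so both directions follow.
\<close>

definition prohorov_admissible :: "real \<Rightarrow> 'a::metric_space measure \<Rightarrow> 'a measure \<Rightarrow> bool" where
  "prohorov_admissible e \<mu> \<nu> \<longleftrightarrow>
     (\<forall>A \<in> sets borel. measure \<mu> (open_nbhd e A) \<ge> measure \<nu> A - e)"

lemma prohorov_eq_Inf_admissible: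
  "prohorov \<mu> \<nu> = Inf {e. e > 0 \<and> prohorov_admissible e \<mu> \<nu>}"
  unfolding prohorov_def prohorov_admissible_def ..

lemma prohorov_admissible_one:
  assumes "prob_space \<nu>"
  shows "prohorov_admissible 1 \<mu> \<nu>"
  unfolding prohorov_admissible_def
proof
  fix A
  show "measure \<nu> A - 1 \<le> measure \<mu> (open_nbhd 1 A)"
    using prob_space.prob_le_1[OF assms, of A] measure_nonneg[of \<mu> "open_nbhd 1 A"]
    by linarith
qed

lemma open_open_nbhd: "open (open_nbhd e A)"
proof -
  have "open_nbhd e A = (\<Union>a\<in>A. ball a e)"
    unfolding open_nbhd_def by (auto simp: dist_commute)
  thus ?thesis by auto
qed

lemma open_nbhd_compl_open_nbhd: "open_nbhd e (- open_nbhd e A) \<subseteq> - A"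
  unfolding open_nbhd_def by (auto simp: dist_commute) (metis dist_commute)

lemma space_eq_UNIV_if_sets_borel: "sets M = sets borel \<Longrightarrow> space M = UNIV"
  by (metis sets_eq_imp_space_eq space_borel)

lemma lipschitz_on_dist_maps:
  fixes f g :: "'a::metric_space \<Rightarrow> 'b::metric_space"
  assumes f: "L-lipschitz_on U f" and g: "K-lipschitz_on U g"
  shows "(L + K)-lipschitz_on U (\<lambda>x. dist (f x) (g x))"
proof (rule lipschitz_onI)
  fix x y assume "x \<in> U" "y \<in> U"
  then have "dist (f x) (f y) \<le> L * dist x y" "dist (g x) (g y) \<le> K * dist x y"
    using f g by (auto dest: lipschitz_onD)
  moreover have "\<bar>dist (f x) (g x) - dist (f y) (g y)\<bar> \<le> dist (f x) (f y) + dist (g x) (g y)"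
    using dist_triangle2[of "f x" "g x" "f y"] dist_triangle2[of "f y" "g y" "f x"]
      dist_triangle2[of "f y" "g x" "g y"] dist_triangle2[of "f x" "g y" "g x"]
    by (simp add: dist_commute abs_le_iff)
  ultimately show "dist (dist (f x) (g x)) (dist (f y) (g y)) \<le> (L + K) * dist x y"
    by (simp add: dist_real_def distrib_right)
qed (use lipschitz_on_nonneg[OF f] lipschitz_on_nonneg[OF g] in simp)

lemma prohorov_admissible_sym:
  assumes sets_\<mu>: "sets \<mu> = sets borel" and "prob_space \<mu>"
    and sets_\<nu>: "sets \<nu> = sets borel" and "prob_space \<nu>"
    and adm: "prohorov_admissible e \<mu> \<nu>"
  shows "prohorov_admissible e \<nu> \<mu>"
  unfolding prohorov_admissible_def
proof
  fix A :: "'a set" assume A: "A \<in> sets borel"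
  define B where "B = - open_nbhd e A"
  have "open_nbhd e A \<in> sets \<nu>" "B \<in> sets borel"
    using open_open_nbhd[of e A] sets_\<nu> by (auto simp: B_def)
  then have "measure \<nu> B = 1 - measure \<nu> (open_nbhd e A)"
    using prob_space.prob_compl[OF \<open>prob_space \<nu>\<close>] space_eq_UNIV_if_sets_borel[OF sets_\<nu>]
    by (simp add: B_def Compl_eq_Diff_UNIV)
  moreover have "measure \<mu> (open_nbhd e B) \<le> measure \<mu> (- A)"
    using open_nbhd_compl_open_nbhd[of e A] open_open_nbhd[of e B] sets_\<mu> A
      prob_space.finite_measure[OF \<open>prob_space \<mu>\<close>]
    by (intro finite_measure.finite_measure_mono) (auto simp: B_def)
  moreover have "measure \<mu> (- A) = 1 - measure \<mu> A"
    using prob_space.prob_compl[OF \<open>prob_space \<mu>\<close>, of A] sets_\<mu> A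
      space_eq_UNIV_if_sets_borel[OF sets_\<mu>]
    by (simp add: Compl_eq_Diff_UNIV)
  moreover have "measure \<mu> (open_nbhd e B) \<ge> measure \<nu> B - e"
    using adm \<open>B \<in> sets borel\<close> by (auto simp: prohorov_admissible_def)
  ultimately show "measure \<nu> (open_nbhd e A) \<ge> measure \<mu> A - e" by linarith
qed

lemma ky_fan_le_if_prohorov_admissible:
  fixes f g :: "'a::metric_space \<Rightarrow> 'b::metric_space"
  assumes "1-lipschitz_on UNIV f" and "1-lipschitz_on UNIV g"
    and sets_\<mu>: "sets \<mu> = sets borel" and sets_\<nu>: "sets \<nu> = sets borel" and "prob_space \<nu>"
    and "e \<ge> 0" and adm: "prohorov_admissible e \<nu> \<mu>"
  shows "ky_fan \<mu> f g \<le> ky_fan \<nu> f g + 2 * e"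
proof -
  define D where "D x = dist (f x) (g x)" for x
  let ?W = "\<lambda>M. {d. d \<ge> 0 \<and> measure M {x \<in> space M. D x > d} \<le> d}"
  have D_lip: "2-lipschitz_on UNIV D"
    using lipschitz_on_dist_maps[OF assms(1,2)] by (simp add: D_def [abs_def])
  have superlevel_borel: "{x. D x > d} \<in> sets borel" for d
    using lipschitz_on_continuous_on[OF D_lip]
    by (intro borel_open open_Collect_less continuous_on_const) auto
  have "ky_fan \<mu> f g - 2 * e \<le> Inf (?W \<nu>)"
  proof (rule cInf_greatest)
    have "1 \<in> ?W \<nu>"
      using prob_space.prob_le_1[OF \<open>prob_space \<nu>\<close>] by auto
    then show "?W \<nu> \<noteq> {}" by blast
  next
    fix d assume d: "d \<in> ?W \<nu>"
    define A where "A = {x. D x > d + 2 * e}"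
    have "open_nbhd e A \<subseteq> {x. D x > d}"
    proof
      fix x assume "x \<in> open_nbhd e A"
      then obtain a where "D a > d + 2 * e" "dist x a < e"
        unfolding open_nbhd_def A_def by auto
      moreover have "D a \<le> D x + 2 * dist a x"
        using lipschitz_onD[OF D_lip, of a x] by (simp add: dist_real_def)
      ultimately show "x \<in> {x. D x > d}" by (simp add: dist_commute)
    qed
    then have "measure \<nu> (open_nbhd e A) \<le> measure \<nu> {x. D x > d}"
      using superlevel_borel sets_\<nu> prob_space.finite_measure[OF \<open>prob_space \<nu>\<close>]
      by (intro finite_measure.finite_measure_mono) auto
    also have "\<dots> \<le> d"
      using d space_eq_UNIV_if_sets_borel[OF sets_\<nu>] by simp
    finally have "measure \<nu> (open_nbhd e A) \<le> d" .
    moreover have "measure \<mu> A \<le> measure \<nu> (open_nbhd e A) + e"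
      using adm superlevel_borel[of "d + 2 * e"] unfolding prohorov_admissible_def A_def by force
    ultimately have "measure \<mu> A \<le> d + 2 * e"
      using \<open>e \<ge> 0\<close> by linarith
    then have "d + 2 * e \<in> ?W \<mu>"
      using d \<open>e \<ge> 0\<close> space_eq_UNIV_if_sets_borel[OF sets_\<mu>] by (simp add: A_def)
    then have "Inf (?W \<mu>) \<le> d + 2 * e"
      by (intro cInf_lower bdd_belowI[of _ 0]) auto
    then show "ky_fan \<mu> f g - 2 * e \<le> d"
      by (simp add: ky_fan_def D_def)
  qed
  then show ?thesis by (simp add: ky_fan_def D_def)
qed

theorem lemma5p6:
  fixes f g :: "'a::metric_space \<Rightarrow> 'b::metric_space"
    and \<mu> \<nu> :: "'a measure"
  assumes "1-lipschitz_on UNIV f" and "1-lipschitz_on UNIV g"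
    and "sets \<mu> = sets borel" and "prob_space \<mu>"
    and "sets \<nu> = sets borel" and "prob_space \<nu>"
  shows "\<bar>ky_fan \<mu> f g - ky_fan \<nu> f g\<bar> \<le> 2 * prohorov \<mu> \<nu>"
proof -
  have "\<bar>ky_fan \<mu> f g - ky_fan \<nu> f g\<bar> / 2 \<le> Inf {e. e > 0 \<and> prohorov_admissible e \<mu> \<nu>}"
  proof (rule cInf_greatest)
    show "{e. e > 0 \<and> prohorov_admissible e \<mu> \<nu>} \<noteq> {}"
      using prohorov_admissible_one[OF assms(6)] by (auto intro!: exI[of _ 1])
  next
    fix e assume "e \<in> {e. e > 0 \<and> prohorov_admissible e \<mu> \<nu>}"
    then have "e > 0" and adm: "prohorov_admissible e \<mu> \<nu>" by auto
    have "ky_fan \<nu> f g \<le> ky_fan \<mu> f g + 2 * e"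
      using ky_fan_le_if_prohorov_admissible[OF assms(1,2,5,3,4)] \<open>e > 0\<close> adm by simp
    moreover have "ky_fan \<mu> f g \<le> ky_fan \<nu> f g + 2 * e"
      using ky_fan_le_if_prohorov_admissible[OF assms(1,2,3,5,6)] \<open>e > 0\<close>
        prohorov_admissible_sym[OF assms(3-6) adm]
      by simp
    ultimately have "\<bar>ky_fan \<mu> f g - ky_fan \<nu> f g\<bar> \<le> 2 * e"
      unfolding abs_le_iff by linarith
    then show "\<bar>ky_fan \<mu> f g - ky_fan \<nu> f g\<bar> / 2 \<le> e" by simp
  qed
  then show ?thesis by (simp add: prohorov_eq_Inf_admissible)
qed

end
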